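(* Let $N\ge 1$, let $q\in\mathbb C$, and let $S_N$ be the symmetric group with group algebra $\mathbb C[S_N]$, with composition convention $(\sigma_2\sigma_1)(i)=\sigma_2(\sigma_1(i))$, and let $e$ be its identity element. For a transposition $t=(A,A+1)$ of neighboring integers and $x\in\mathbb C$, let $w_{t,x}:\mathbb C[S_N]\to\mathbb C[S_N]$ be the linear operator given on $\sigma\in S_N$ by $$w_{t,x}(\sigma)=\begin{cases}(1-x)\sigma+x\,t\sigma, & \text{if } \sigma^{-1}(A)<\sigma^{-1}(A+1),\\ (1-qx)\sigma+qx\,t\sigma, & \text{if } \sigma^{-1}(A)>\sigma^{-1}(A+1).\end{cases}$$ For any transpositions of neighboring integers $t_1,\dots,t_n$ and parameters $x_1,\dots,x_n\in\mathbb C$, define coefficients $f_n(s\to\pi)$ and $\tilde f_n(s\to\pi)$, $s,\pi\in S_N$, by $$w_{t_n,x_n}\cdots w_{t_1,x_1}\, s=\sum_{\pi\in S_N} f_n(s\to\pi)\,\pi,\qquad w_{t_1,x_1}w_{t_2,x_2}\cdots w_{t_n,x_n}\, s=\sum_{\pi\in S_N}\tilde f_n(s\to\pi)\,\pi .$$ Then for every $\pi\in S_N$, $$f_n(e\to\pi)=\tilde f_n(e\to\pi^{-1}).$$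
   Context: All objects are defined in the claim; the operators are applied in opposite orders in the definitions of $f_n$ and $\tilde f_n$. *)

theory Defs
  imports "HOL-Combinatorics.Combinatorics" Complex_Main
begin

text \<open>Elements of the symmetric group S_N are the permutations of {1..N}
 (functions nat => nat fixing everything outside {1..N}); composition is
 function composition, (s2 o s1) i = s2 (s1 i). An element of the group algebra
 C[S_N] is represented by its coefficient function (nat => nat) => complex
 (only values at permutations of {1..N} are relevant).\<close>

definition perms :: "nat \<Rightarrow> (nat \<Rightarrow> nat) set" where
  "perms N = {s. s permutes {1..N}}"

definition basis_vec :: "(nat \<Rightarrow> nat) \<Rightarrow> (nat \<Rightarrow> nat) \<Rightarrow> complex" where
  "basis_vec s = (\<lambda>p. if p = s then 1 else 0)"

definition w_coeff :: "complex \<Rightarrow> nat \<Rightarrow> complex \<Rightarrow> (nat \<Rightarrow> nat) \<Rightarrow> (nat \<Rightarrow> nat) \<Rightarrow> complex" where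
  "w_coeff q A x \<sigma> \<pi> =
     (let t = Transposition.transpose A (A + 1) in
      if inv \<sigma> A < inv \<sigma> (A + 1)
      then (if \<pi> = \<sigma> then 1 - x else 0) + (if \<pi> = t \<circ> \<sigma> then x else 0)
      else (if \<pi> = \<sigma> then 1 - q * x else 0) + (if \<pi> = t \<circ> \<sigma> then q * x else 0))"

definition w_op :: "nat \<Rightarrow> complex \<Rightarrow> nat \<Rightarrow> complex \<Rightarrow> ((nat \<Rightarrow> nat) \<Rightarrow> complex) \<Rightarrow> ((nat \<Rightarrow> nat) \<Rightarrow> complex)" where
  "w_op N q A x v = (\<lambda>\<pi>. \<Sum>\<sigma>\<in>perms N. v \<sigma> * w_coeff q A x \<sigma> \<pi>)"

text \<open>ts = [(A_1,x_1),...,(A_n,x_n)], t_i = (A_i, A_i+1).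
 f_coeffs: w_{t_n,x_n} ... w_{t_1,x_1} s;  f_tilde_coeffs: w_{t_1,x_1} ... w_{t_n,x_n} s.\<close>
definition f_coeffs :: "nat \<Rightarrow> complex \<Rightarrow> (nat \<times> complex) list \<Rightarrow> (nat \<Rightarrow> nat) \<Rightarrow> (nat \<Rightarrow> nat) \<Rightarrow> complex" where
  "f_coeffs N q ts s = foldl (\<lambda>v (A, x). w_op N q A x v) (basis_vec s) ts"

definition f_tilde_coeffs :: "nat \<Rightarrow> complex \<Rightarrow> (nat \<times> complex) list \<Rightarrow> (nat \<Rightarrow> nat) \<Rightarrow> (nat \<Rightarrow> nat) \<Rightarrow> complex" where
  "f_tilde_coeffs N q ts s = foldr (\<lambda>(A, x) v. w_op N q A x v) ts (basis_vec s)"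

end

theory Submission
  imports Defs
begin

(*
  On coefficient functions, w_{t,x} maps v to \<pi> \<mapsto> v(\<pi>)(1 - r(\<pi>)) + v(t\<pi>) r(t\<pi>), where
  r(\<sigma>) is x or q x according as \<sigma>^-1(A) < \<sigma>^-1(A+1).  Replacing t\<pi> by \<pi>t and \<sigma>^-1 by \<sigma>
  gives the same operator with t acting from the right, and inverting group elements
  intertwines the two.  So f_n(e \<rightarrow> \<pi>) is the coefficient of \<pi>^-1 in r_n \<cdots> r_1 e, where r_i
  is the right version of w_{t_i,x_i}.  Left and right operators commute (unless
  t_B \<pi> = \<pi> t_A, neither swap changes the other's ascent condition), and r_i e = w_i e
  because e t = t e; moving each r_i past the others gives r_n \<cdots> r_1 e = w_1 \<cdots> w_n e.
*)

abbreviation adjacent_swap :: "nat \<Rightarrow> nat \<Rightarrow> nat" where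
  "adjacent_swap A \<equiv> Transposition.transpose A (A + 1)"

lemma foldl_commute_apply:
  assumes "\<And>a v. a \<in> set xs \<Longrightarrow> h (f v a) = g (h v) a"
  shows "h (foldl f s xs) = foldl g (h s) xs"
  using assms by (induction xs arbitrary: s) simp_all

lemma foldl_eq_foldr_if_commute:
  assumes "\<And>a b v. a \<in> set xs \<Longrightarrow> b \<in> set xs \<Longrightarrow> g (f b v) a = f b (g v a)"
    and "\<And>a. a \<in> set xs \<Longrightarrow> g e a = f a e"
  shows "foldl g e xs = foldr f xs e"
  using assms
proof (induction xs rule: rev_induct)
  case Nil
  show ?case by simp
next
  case (snoc a xs)
  have "foldl g e xs = foldr f xs e"
    using snoc.prems by (intro snoc.IH) auto
  moreover have "g (foldr f xs v) a = foldr f xs (g v a)" for v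
    using snoc.prems(1) by (induction xs) auto
  ultimately show ?case
    using snoc.prems(2) by simp
qed

lemma adjacent_swap_less_adjacent_swap_iff:
  fixes a b C :: nat
  assumes "a \<noteq> b" and "{a, b} \<noteq> {C, C + 1}"
  shows "adjacent_swap C a < adjacent_swap C b \<longleftrightarrow> a < b"
  using assms unfolding transpose_def doubleton_eq_iff by auto

definition swap_rate :: "complex \<Rightarrow> complex \<Rightarrow> bool \<Rightarrow> complex" where
  "swap_rate q x ascent = (if ascent then x else q * x)"

lemma adjacent_swap_comp_in_perms_iff:
  assumes "1 \<le> A" "A + 1 \<le> N"
  shows "adjacent_swap A \<circ> \<pi> \<in> perms N \<longleftrightarrow> \<pi> \<in> perms N"
    and "\<pi> \<circ> adjacent_swap A \<in> perms N \<longleftrightarrow> \<pi> \<in> perms N"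
proof -
  have t: "adjacent_swap A permutes {1..N}"
    using assms by (intro permutes_swap_id) auto
  show "adjacent_swap A \<circ> \<pi> \<in> perms N \<longleftrightarrow> \<pi> \<in> perms N"
    using permutes_compose[OF _ t] permutes_compose[OF _ t, of "adjacent_swap A \<circ> \<pi>"]
    by (auto simp: perms_def comp_assoc[symmetric])
  show "\<pi> \<circ> adjacent_swap A \<in> perms N \<longleftrightarrow> \<pi> \<in> perms N"
    using permutes_compose[OF t] permutes_compose[OF t, of "\<pi> \<circ> adjacent_swap A"]
    by (auto simp: perms_def comp_assoc)
qed

lemma w_op_eq:
  assumes "1 \<le> A" "A + 1 \<le> N"
  shows "w_op N q A x v \<pi> =
    (if \<pi> \<in> perms N
     then v \<pi> * (1 - swap_rate q x (inv \<pi> A < inv \<pi> (A + 1)))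
        + v (adjacent_swap A \<circ> \<pi>) * swap_rate q x (inv \<pi> (A + 1) < inv \<pi> A)
     else 0)"
proof -
  define t where "t = adjacent_swap A"
  have t_eq_iff: "\<pi> = t \<circ> \<sigma> \<longleftrightarrow> \<sigma> = t \<circ> \<pi>" for \<sigma>
    by (auto simp: t_def comp_assoc[symmetric])
  have summand_eq: "v \<sigma> * w_coeff q A x \<sigma> \<pi> =
      (if \<sigma> = \<pi> then v \<sigma> * (1 - swap_rate q x (inv \<sigma> A < inv \<sigma> (A + 1))) else 0)
    + (if \<sigma> = t \<circ> \<pi> then v \<sigma> * swap_rate q x (inv \<sigma> A < inv \<sigma> (A + 1)) else 0)" for \<sigma>
    unfolding w_coeff_def Let_def swap_rate_def t_def[symmetric] t_eq_iff
    by (auto simp: algebra_simps)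
  have "w_op N q A x v \<pi> =
      (if \<pi> \<in> perms N then v \<pi> * (1 - swap_rate q x (inv \<pi> A < inv \<pi> (A + 1))) else 0)
    + (if t \<circ> \<pi> \<in> perms N then v (t \<circ> \<pi>) * swap_rate q x (inv (t \<circ> \<pi>) A < inv (t \<circ> \<pi>) (A + 1)) else 0)"
    unfolding w_op_def summand_eq sum.distrib
    by (simp add: perms_def finite_permutations)
  moreover have "inv (t \<circ> \<pi>) = inv \<pi> \<circ> t" if "\<pi> \<in> perms N"
    using that by (simp add: t_def perms_def o_inv_distrib permutes_bij)
  ultimately show ?thesis
    using adjacent_swap_comp_in_perms_iff[OF assms] by (simp add: t_def)
qed

definition right_op :: "nat \<Rightarrow> complex \<Rightarrow> nat \<Rightarrow> complex \<Rightarrow> ((nat \<Rightarrow> nat) \<Rightarrow> complex) \<Rightarrow> ((nat \<Rightarrow> nat) \<Rightarrow> complex)" where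
  "right_op N q A x v \<pi> =
    (if \<pi> \<in> perms N
     then v \<pi> * (1 - swap_rate q x (\<pi> A < \<pi> (A + 1)))
        + v (\<pi> \<circ> adjacent_swap A) * swap_rate q x (\<pi> (A + 1) < \<pi> A)
     else 0)"

definition inv_vec :: "nat \<Rightarrow> ((nat \<Rightarrow> nat) \<Rightarrow> complex) \<Rightarrow> ((nat \<Rightarrow> nat) \<Rightarrow> complex)" where
  "inv_vec N v \<pi> = (if \<pi> \<in> perms N then v (inv \<pi>) else 0)"

lemma inv_vec_basis_vec_id: "inv_vec N (basis_vec id) = basis_vec id"
proof
  fix \<pi>
  have "inv \<pi> = id \<longleftrightarrow> \<pi> = id" if "\<pi> \<in> perms N"
    using that by (metis inv_id inv_inv_eq perms_def permutes_bij mem_Collect_eq)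
  moreover have "id \<in> perms N"
    by (simp add: perms_def)
  ultimately show "inv_vec N (basis_vec id) \<pi> = basis_vec id \<pi>"
    by (auto simp: inv_vec_def basis_vec_def)
qed

lemma inv_vec_w_op:
  assumes "1 \<le> A" "A + 1 \<le> N"
  shows "inv_vec N (w_op N q A x v) = right_op N q A x (inv_vec N v)"
proof
  fix \<pi>
  show "inv_vec N (w_op N q A x v) \<pi> = right_op N q A x (inv_vec N v) \<pi>"
  proof (cases "\<pi> \<in> perms N")
    case True
    then have "bij \<pi>" and "inv \<pi> \<in> perms N"
      by (simp_all add: perms_def permutes_bij permutes_inv)
    then show ?thesis
      using adjacent_swap_comp_in_perms_iff[OF assms]
      by (simp add: inv_vec_def right_op_def w_op_eq[OF assms] inv_inv_eq o_inv_distrib)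
  qed (simp add: inv_vec_def right_op_def)
qed

lemma right_op_basis_vec_id:
  assumes "1 \<le> A" "A + 1 \<le> N"
  shows "right_op N q A x (basis_vec id) = w_op N q A x (basis_vec id)"
proof
  fix \<pi>
  define t where "t = adjacent_swap A"
  have "\<pi> \<circ> t = id \<longleftrightarrow> \<pi> = t" and "t \<circ> \<pi> = id \<longleftrightarrow> \<pi> = t"
    unfolding t_def by (metis comp_id id_comp comp_assoc transpose_comp_involutory)+
  moreover have "t \<noteq> id"
    by (simp add: t_def transpose_eq_id_iff)
  ultimately show "right_op N q A x (basis_vec id) \<pi> = w_op N q A x (basis_vec id) \<pi>"
    by (auto simp: right_op_def w_op_eq[OF assms] basis_vec_def t_def[symmetric])
      (auto simp: t_def)
qed

lemma adjacent_swap_comp_eq_comp_adjacent_swap: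
  assumes "bij \<pi>" and "{\<pi> A, \<pi> (A + 1)} = {B, B + 1}"
  shows "adjacent_swap B \<circ> \<pi> = \<pi> \<circ> adjacent_swap A"
proof -
  have "inv \<pi> ` {\<pi> A, \<pi> (A + 1)} = inv \<pi> ` {B, B + 1}"
    using assms(2) by simp
  then have "{inv \<pi> B, inv \<pi> (B + 1)} = {A, A + 1}"
    using bij_is_inj[OF assms(1)] by simp
  then have "Transposition.transpose (inv \<pi> B) (inv \<pi> (B + 1)) = adjacent_swap A"
    by (auto simp: doubleton_eq_iff transpose_commute)
  then show ?thesis
    using transpose_comp_eq[OF assms(1)] by simp
qed

lemma adjacent_swap_preserves_ascents:
  assumes "bij \<pi>" and "{\<pi> A, \<pi> (A + 1)} \<noteq> {B, B + 1}"
  shows "adjacent_swap B (\<pi> A) < adjacent_swap B (\<pi> (A + 1)) \<longleftrightarrow> \<pi> A < \<pi> (A + 1)"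
    and "adjacent_swap B (\<pi> (A + 1)) < adjacent_swap B (\<pi> A) \<longleftrightarrow> \<pi> (A + 1) < \<pi> A"
    and "adjacent_swap A (inv \<pi> B) < adjacent_swap A (inv \<pi> (B + 1)) \<longleftrightarrow> inv \<pi> B < inv \<pi> (B + 1)"
    and "adjacent_swap A (inv \<pi> (B + 1)) < adjacent_swap A (inv \<pi> B) \<longleftrightarrow> inv \<pi> (B + 1) < inv \<pi> B"
proof -
  have inv_\<pi>: "inv \<pi> (\<pi> i) = i" "\<pi> (inv \<pi> i) = i" for i
    using assms(1) by (simp_all add: bij_is_inj bij_is_surj surj_f_inv_f)
  have "\<pi> A \<noteq> \<pi> (A + 1)" "inv \<pi> B \<noteq> inv \<pi> (B + 1)"
    by (metis inv_\<pi>(1) n_not_Suc_n Suc_eq_plus1, metis inv_\<pi>(2) n_not_Suc_n Suc_eq_plus1)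
  moreover have "{inv \<pi> B, inv \<pi> (B + 1)} \<noteq> {A, A + 1}"
  proof
    assume "{inv \<pi> B, inv \<pi> (B + 1)} = {A, A + 1}"
    then have "\<pi> ` {inv \<pi> B, inv \<pi> (B + 1)} = \<pi> ` {A, A + 1}"
      by simp
    with assms(2) show False
      by (simp add: inv_\<pi>)
  qed
  ultimately show
      "adjacent_swap B (\<pi> A) < adjacent_swap B (\<pi> (A + 1)) \<longleftrightarrow> \<pi> A < \<pi> (A + 1)"
      "adjacent_swap B (\<pi> (A + 1)) < adjacent_swap B (\<pi> A) \<longleftrightarrow> \<pi> (A + 1) < \<pi> A"
      "adjacent_swap A (inv \<pi> B) < adjacent_swap A (inv \<pi> (B + 1)) \<longleftrightarrow> inv \<pi> B < inv \<pi> (B + 1)"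
      "adjacent_swap A (inv \<pi> (B + 1)) < adjacent_swap A (inv \<pi> B) \<longleftrightarrow> inv \<pi> (B + 1) < inv \<pi> B"
    using assms(2) by - (rule adjacent_swap_less_adjacent_swap_iff; simp add: insert_commute)+
qed

lemma right_op_w_op_apply:
  assumes "1 \<le> A" "A + 1 \<le> N" and B: "1 \<le> B" "B + 1 \<le> N" and "\<pi> \<in> perms N"
  shows "right_op N q A y (w_op N q B x v) \<pi> =
      (v \<pi> * (1 - swap_rate q x (inv \<pi> B < inv \<pi> (B + 1)))
        + v (adjacent_swap B \<circ> \<pi>) * swap_rate q x (inv \<pi> (B + 1) < inv \<pi> B))
      * (1 - swap_rate q y (\<pi> A < \<pi> (A + 1)))
    + (v (\<pi> \<circ> adjacent_swap A)
        * (1 - swap_rate q x (adjacent_swap A (inv \<pi> B) < adjacent_swap A (inv \<pi> (B + 1))))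
        + v (adjacent_swap B \<circ> \<pi> \<circ> adjacent_swap A)
        * swap_rate q x (adjacent_swap A (inv \<pi> (B + 1)) < adjacent_swap A (inv \<pi> B)))
      * swap_rate q y (\<pi> (A + 1) < \<pi> A)"
proof -
  have "inv (\<pi> \<circ> adjacent_swap A) = adjacent_swap A \<circ> inv \<pi>"
    using assms(5) by (simp add: perms_def permutes_bij o_inv_distrib)
  then show ?thesis
    using assms(5) adjacent_swap_comp_in_perms_iff[OF assms(1,2)]
    by (simp add: w_op_eq[OF B] right_op_def comp_assoc)
qed

lemma w_op_right_op_apply:
  assumes "1 \<le> A" "A + 1 \<le> N" and B: "1 \<le> B" "B + 1 \<le> N" and "\<pi> \<in> perms N"
  shows "w_op N q B x (right_op N q A y v) \<pi> =
      (v \<pi> * (1 - swap_rate q y (\<pi> A < \<pi> (A + 1)))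
        + v (\<pi> \<circ> adjacent_swap A) * swap_rate q y (\<pi> (A + 1) < \<pi> A))
      * (1 - swap_rate q x (inv \<pi> B < inv \<pi> (B + 1)))
    + (v (adjacent_swap B \<circ> \<pi>)
        * (1 - swap_rate q y (adjacent_swap B (\<pi> A) < adjacent_swap B (\<pi> (A + 1))))
        + v (adjacent_swap B \<circ> \<pi> \<circ> adjacent_swap A)
        * swap_rate q y (adjacent_swap B (\<pi> (A + 1)) < adjacent_swap B (\<pi> A)))
      * swap_rate q x (inv \<pi> (B + 1) < inv \<pi> B)"
  using assms(5) adjacent_swap_comp_in_perms_iff[OF assms(1,2)] adjacent_swap_comp_in_perms_iff[OF B]
  by (simp add: w_op_eq[OF B] right_op_def)

lemma right_op_w_op_commute:
  assumes A: "1 \<le> A" "A + 1 \<le> N" and B: "1 \<le> B" "B + 1 \<le> N"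
  shows "right_op N q A y (w_op N q B x v) = w_op N q B x (right_op N q A y v)"
proof
  fix \<pi>
  show "right_op N q A y (w_op N q B x v) \<pi> = w_op N q B x (right_op N q A y v) \<pi>"
  proof (cases "\<pi> \<in> perms N")
    case False
    then show ?thesis by (simp add: w_op_eq[OF B] right_op_def)
  next
    case perm: True
    then have "bij \<pi>"
      by (simp add: perms_def permutes_bij)
    note expand = right_op_w_op_apply[OF A B perm] w_op_right_op_apply[OF A B perm]
    show ?thesis
    proof (cases "{\<pi> A, \<pi> (A + 1)} = {B, B + 1}")
      case False
      show ?thesis
        unfolding expand adjacent_swap_preserves_ascents[OF \<open>bij \<pi>\<close> False]
        by (simp add: algebra_simps)
    next
      case True
      \<comment> \<open>Both operators act on span {\<pi>, \<pi> \<circ> adjacent_swap A} as id + x K and id + y K for one K.\<close>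
      then have swap_eq: "adjacent_swap B \<circ> \<pi> = \<pi> \<circ> adjacent_swap A"
        by (rule adjacent_swap_comp_eq_comp_adjacent_swap[OF \<open>bij \<pi>\<close>])
      from True consider
          "\<pi> A = B" "\<pi> (A + 1) = B + 1" "inv \<pi> B = A" "inv \<pi> (B + 1) = A + 1"
        | "\<pi> A = B + 1" "\<pi> (A + 1) = B" "inv \<pi> B = A + 1" "inv \<pi> (B + 1) = A"
        by (metis doubleton_eq_iff inv_f_eq bij_is_inj \<open>bij \<pi>\<close>)
      then show ?thesis
        unfolding expand swap_eq
        by cases (simp_all add: swap_rate_def algebra_simps)
    qed
  qed
qed

theorem theorem2p2:
  fixes N :: nat and q :: complex and ts :: "(nat \<times> complex) list" and \<pi> :: "nat \<Rightarrow> nat"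
  assumes "N \<ge> 1"
    and "\<forall>(A, x) \<in> set ts. 1 \<le> A \<and> A + 1 \<le> N"
    and "\<pi> permutes {1..N}"
  shows "f_coeffs N q ts id \<pi> = f_tilde_coeffs N q ts id (inv \<pi>)"
proof -
  let ?e = "basis_vec id"
  have in_range: "1 \<le> A" "A + 1 \<le> N" if "(A, x) \<in> set ts" for A x
    using assms(2) that by auto
  have "f_coeffs N q ts id \<pi> = inv_vec N (foldl (\<lambda>v (A, x). w_op N q A x v) ?e ts) (inv \<pi>)"
    using assms(3) by (simp add: f_coeffs_def inv_vec_def perms_def permutes_inv permutes_inv_inv)
  also have "inv_vec N (foldl (\<lambda>v (A, x). w_op N q A x v) ?e ts)
      = foldl (\<lambda>v (A, x). right_op N q A x v) (inv_vec N ?e) ts"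
    by (rule foldl_commute_apply[where h = "inv_vec N"]) (auto intro!: inv_vec_w_op intro: in_range)
  also have "\<dots> = foldr (\<lambda>(A, x) v. w_op N q A x v) ts ?e"
    unfolding inv_vec_basis_vec_id
    by (rule foldl_eq_foldr_if_commute)
      (auto intro!: right_op_w_op_commute right_op_basis_vec_id intro: in_range)
  finally show ?thesis
    unfolding f_tilde_coeffs_def .
qed

end
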